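(* Let $(X,Y,R)$ be a random triple with $X\in\mathbb{R}^d$, $Y\in\{0,1\}$, $R\in\{0,1\}$, $P(Y=y,R=r)>0$ for all $y,r$, and with strictly positive conditional Lebesgue densities $p(x\mid Y=y,R=r)$. Suppose the exponential tilt model with $T(x)=x$ holds: there exist $\alpha_0^\star,\alpha_1^\star\in\mathbb{R}$, $\beta_0^\star,\beta_1^\star\in\mathbb{R}^d$ such that for all $x,y$, $$p(x\mid Y=y,R=0)P(Y=y\mid R=0)=\exp(\alpha_y^\star+{\beta_y^\star}^\top x)\,p(x\mid Y=y,R=1)P(Y=y\mid R=1).$$ Let $B=(\beta_0^\star,\beta_1^\star)\in\mathbb{R}^{d\times 2}$, $U=B^\top X$, and $V=(\mathbf{I}-\mathbf{P}_B)X$, where $\mathbf{P}_B$ is the orthogonal projection onto the column space of $B$. Then $V\perp R\mid (Y,U)$, and hence $X\perp R\mid (Y,U)$.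
   Context: $\perp$ denotes conditional independence. *)

theory Defs
  imports "HOL-Probability.Probability"
begin

definition orth_proj :: "'v::euclidean_space set \<Rightarrow> 'v \<Rightarrow> 'v" where
  "orth_proj S x = (THE p. p \<in> S \<and> (\<forall>v\<in>S. (x - p) \<bullet> v = 0))"

definition cond_indep ::
  "'a measure \<Rightarrow> ('a \<Rightarrow> 'b) \<Rightarrow> 'b measure \<Rightarrow> ('a \<Rightarrow> 'c) \<Rightarrow> 'c measure
     \<Rightarrow> ('a \<Rightarrow> 'e) \<Rightarrow> 'e measure \<Rightarrow> bool" where
  "cond_indep M V MV R MR Z MZ \<longleftrightarrow>
     (\<forall>A\<in>sets MV. \<forall>B\<in>sets MR.
        AE \<omega> in M.
          real_cond_exp M (vimage_algebra (space M) Z MZ)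
              (\<lambda>\<omega>. indicator A (V \<omega>) * indicator B (R \<omega>)) \<omega>
          = real_cond_exp M (vimage_algebra (space M) Z MZ) (\<lambda>\<omega>. indicator A (V \<omega>)) \<omega>
            * real_cond_exp M (vimage_algebra (space M) Z MZ) (\<lambda>\<omega>. indicator B (R \<omega>)) \<omega>)"

end

(*
  Bayes' formula turns the cell densities into the propensity
  P(R = 1 | Y = y, X = x) = q(y,1,x) / (q(y,0,x) + q(y,1,x)), where q(y,r,x) = P(Y = y, R = r) p(x | y, r).
  Under the exponential tilt this equals 1 / (1 + c exp (alpha_y + beta_y . x)) with
  c = P(R = 0) / P(R = 1), so it depends on (Y, X) only through (Y, U).  A binary R whose
  propensity given (Z, V) is a function h(Z) of Z alone is conditionally independent of V given Z:
  E[1_A(V) 1{R = 1} | Z] = h(Z) E[1_A(V) | Z] = E[1_A(V) | Z] E[1{R = 1} | Z], and every indicator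
  of R is affine in 1{R = 1}.  Taking Z = (Y, U) and V the residual (I - P_B) X, or X itself,
  gives both claims.
*)
theory Submission
  imports Defs
begin

lemma orth_proj_eqI:
  fixes S :: "'v::euclidean_space set"
  assumes S: "subspace S" and "p \<in> S" and orth: "\<forall>v\<in>S. (x - p) \<bullet> v = 0"
  shows "orth_proj S x = p"
  unfolding orth_proj_def
proof (rule the_equality)
  fix q assume q: "q \<in> S \<and> (\<forall>v\<in>S. (x - q) \<bullet> v = 0)"
  have "p - q \<in> S" using S \<open>p \<in> S\<close> q by (simp add: subspace_diff)
  then have "(x - q) \<bullet> (p - q) - (x - p) \<bullet> (p - q) = 0" using orth q by simp
  then have "(p - q) \<bullet> (p - q) = 0" by (simp add: inner_diff_left)
  then show "q = p" by simp
qed (use assms in blast)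

lemma orth_proj_in_orthogonal:
  fixes S :: "'v::euclidean_space set"
  assumes "subspace S"
  shows "orth_proj S x \<in> S" and "\<forall>v\<in>S. (x - orth_proj S x) \<bullet> v = 0"
proof -
  obtain y z where "y \<in> span S" and "\<And>w. w \<in> span S \<Longrightarrow> orthogonal z w" and "x = y + z"
    using orthogonal_subspace_decomp_exists by blast
  moreover have "span S = S" using assms by (simp add: span_eq_iff)
  ultimately have "y \<in> S" "\<forall>v\<in>S. (x - y) \<bullet> v = 0" "orth_proj S x = y"
    using orth_proj_eqI[OF assms] by (auto simp: orthogonal_def)
  then show "orth_proj S x \<in> S" "\<forall>v\<in>S. (x - orth_proj S x) \<bullet> v = 0" by simp_all
qed

lemma linear_orth_proj:
  fixes S :: "'v::euclidean_space set"
  assumes S: "subspace S"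
  shows "linear (orth_proj S)"
proof (rule linearI)
  fix x y
  show "orth_proj S (x + y) = orth_proj S x + orth_proj S y"
    using orth_proj_in_orthogonal[OF S, of x] orth_proj_in_orthogonal[OF S, of y]
    by (intro orth_proj_eqI S)
       (auto simp: subspace_add[OF S] algebra_simps inner_diff_left inner_add_left)
next
  fix c :: real and x
  have "c *\<^sub>R x - c *\<^sub>R orth_proj S x = c *\<^sub>R (x - orth_proj S x)" by (simp add: algebra_simps)
  then show "orth_proj S (c *\<^sub>R x) = c *\<^sub>R orth_proj S x"
    using orth_proj_in_orthogonal[OF S, of x]
    by (intro orth_proj_eqI S) (auto simp: subspace_scale[OF S])
qed

lemma borel_measurable_orth_proj:
  fixes S :: "'v::euclidean_space set"
  assumes "subspace S"
  shows "orth_proj S \<in> borel_measurable borel"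
  using linear_orth_proj[OF assms]
  by (intro borel_measurable_continuous_onI linear_continuous_on)
     (simp add: linear_conv_bounded_linear)

lemma (in sigma_finite_subalgebra) real_cond_exp_mult_of_set_integrals:
  assumes [measurable]: "integrable M f" "integrable M (\<lambda>x. f x * w x)"
    "integrable M (\<lambda>x. h x * f x)" "h \<in> borel_measurable F"
    and eq: "\<And>A. A \<in> sets F \<Longrightarrow> (\<integral>x\<in>A. f x * w x \<partial>M) = (\<integral>x\<in>A. h x * f x \<partial>M)"
  shows "AE x in M. real_cond_exp M F (\<lambda>x. f x * w x) x = h x * real_cond_exp M F f x"
proof (rule real_cond_exp_charact)
  fix A assume A: "A \<in> sets F"
  then have [measurable]: "A \<in> sets M" using subalg by (auto simp: subalgebra_def)
  have "(\<integral>x\<in>A. f x * w x \<partial>M) = (\<integral>x. (indicator A x * h x) * f x \<partial>M)"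
    using eq[OF A] unfolding set_lebesgue_integral_def by (simp add: mult.assoc)
  also have "\<dots> = (\<integral>x. (indicator A x * h x) * real_cond_exp M F f x \<partial>M)"
    using integrable_mult_indicator[OF \<open>A \<in> sets M\<close> assms(3)] A
    by (intro real_cond_exp_intg(2)[symmetric]) (auto simp: mult.assoc)
  also have "\<dots> = (\<integral>x\<in>A. h x * real_cond_exp M F f x \<partial>M)"
    unfolding set_lebesgue_integral_def by (simp add: mult.assoc)
  finally show "(\<integral>x\<in>A. f x * w x \<partial>M) = (\<integral>x\<in>A. h x * real_cond_exp M F f x \<partial>M)" .
qed (use assms in \<open>auto intro: real_cond_exp_intg(1)\<close>)

lemma (in finite_measure_subalgebra) real_cond_exp_binary_factorization:
  fixes R :: "'a \<Rightarrow> nat" and B :: "nat set"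
  defines "W \<equiv> \<lambda>\<omega>. if R \<omega> = 1 then 1 else 0 :: real"
  assumes [measurable]: "R \<in> M \<rightarrow>\<^sub>M count_space UNIV"
    and R_vals: "\<And>\<omega>. \<omega> \<in> space M \<Longrightarrow> R \<omega> \<in> {0, 1}"
    and integrable: "integrable M f" "integrable M (\<lambda>\<omega>. f \<omega> * W \<omega>)"
    and cond_fW: "AE \<omega> in M. real_cond_exp M F (\<lambda>\<omega>. f \<omega> * W \<omega>) \<omega> = h \<omega> * real_cond_exp M F f \<omega>"
    and cond_W: "AE \<omega> in M. real_cond_exp M F W \<omega> = h \<omega>"
  shows "AE \<omega> in M. real_cond_exp M F (\<lambda>\<omega>. f \<omega> * indicator B (R \<omega>)) \<omega>
      = real_cond_exp M F f \<omega> * real_cond_exp M F (\<lambda>\<omega>. indicator B (R \<omega>)) \<omega>"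
proof -
  have [measurable]: "f \<in> borel_measurable M" "W \<in> borel_measurable M"
    using integrable unfolding W_def by measurable
  have integrable_W: "integrable M W"
    by (intro integrable_const_bound[where B=1]) (auto simp: W_def)
  define c0 c1 where "c0 = (indicator B 0 :: real)" and "c1 = (indicator B 1 - indicator B 0 :: real)"
  have B_affine: "indicator B (R \<omega>) = c0 + c1 * W \<omega>" if "\<omega> \<in> space M" for \<omega>
    using R_vals[OF that] by (auto simp: c0_def c1_def W_def)
  have "AE \<omega> in M. real_cond_exp M F (\<lambda>\<omega>. f \<omega> * indicator B (R \<omega>)) \<omega>
      = real_cond_exp M F (\<lambda>\<omega>. c0 * f \<omega> + c1 * (f \<omega> * W \<omega>)) \<omega>"
    by (rule real_cond_exp_cong) (auto simp: B_affine algebra_simps)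
  moreover have "AE \<omega> in M. real_cond_exp M F (\<lambda>\<omega>. c0 * f \<omega> + c1 * (f \<omega> * W \<omega>)) \<omega>
      = real_cond_exp M F (\<lambda>\<omega>. c0 * f \<omega>) \<omega> + real_cond_exp M F (\<lambda>\<omega>. c1 * (f \<omega> * W \<omega>)) \<omega>"
    using integrable by (intro real_cond_exp_add) auto
  moreover have "AE \<omega> in M. real_cond_exp M F (\<lambda>\<omega>. indicator B (R \<omega>)) \<omega>
      = real_cond_exp M F (\<lambda>\<omega>. c0 + c1 * W \<omega>) \<omega>"
    by (rule real_cond_exp_cong) (auto simp: B_affine)
  moreover have "AE \<omega> in M. real_cond_exp M F (\<lambda>\<omega>. c0 + c1 * W \<omega>) \<omega>
      = real_cond_exp M F (\<lambda>\<omega>. c0) \<omega> + real_cond_exp M F (\<lambda>\<omega>. c1 * W \<omega>) \<omega>"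
    using integrable_W by (intro real_cond_exp_add) auto
  moreover have "AE \<omega> in M. real_cond_exp M F (\<lambda>\<omega>. c0) \<omega> = c0"
    by (intro real_cond_exp_F_meas) auto
  moreover note real_cond_exp_cmult[OF integrable(1), of c0]
    real_cond_exp_cmult[OF integrable(2), of c1] real_cond_exp_cmult[OF integrable_W, of c1]
    cond_fW cond_W
  ultimately show ?thesis
    by eventually_elim (simp add: algebra_simps)
qed

text \<open>The hypothesis \<open>set_integral_eq\<close> says that h is a version of P(R = 1 | F, V), tested
  on the generating rectangles T \<inter> V -` A.\<close>
lemma (in finite_measure_subalgebra) real_cond_exp_indicator_factorization:
  fixes R :: "'a \<Rightarrow> nat" and B :: "nat set"
  defines "W \<equiv> \<lambda>\<omega>. if R \<omega> = 1 then 1 else 0 :: real"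
  assumes [measurable]: "V \<in> M \<rightarrow>\<^sub>M MV" "R \<in> M \<rightarrow>\<^sub>M count_space UNIV"
    and h_meas[measurable]: "h \<in> borel_measurable F"
    and R_vals: "\<And>\<omega>. \<omega> \<in> space M \<Longrightarrow> R \<omega> \<in> {0, 1}"
    and h_bounds: "\<And>\<omega>. 0 \<le> h \<omega> \<and> h \<omega> \<le> 1"
    and set_integral_eq: "\<And>T A. T \<in> sets F \<Longrightarrow> A \<in> sets MV \<Longrightarrow>
          (\<integral>\<omega>\<in>T. indicator A (V \<omega>) * W \<omega> \<partial>M) = (\<integral>\<omega>\<in>T. h \<omega> * indicator A (V \<omega>) \<partial>M)"
    and A[measurable]: "A \<in> sets MV"
  shows "AE \<omega> in M. real_cond_exp M F (\<lambda>\<omega>. indicator A (V \<omega>) * indicator B (R \<omega>)) \<omega>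
      = real_cond_exp M F (\<lambda>\<omega>. indicator A (V \<omega>)) \<omega> * real_cond_exp M F (\<lambda>\<omega>. indicator B (R \<omega>)) \<omega>"
proof -
  have [measurable]: "h \<in> borel_measurable M"
    using measurable_from_subalg[OF subalg h_meas] .
  have integrable: "integrable M f" if "f \<in> borel_measurable M" "\<And>\<omega>. \<bar>f \<omega>\<bar> \<le> 1" for f :: "'a \<Rightarrow> real"
    using that by (intro integrable_const_bound[where B=1] AE_I2) auto
  have integrable_W: "integrable M W" and integrable_h: "integrable M h"
    using h_bounds by (auto intro: integrable simp: W_def)
  have cond_W: "AE \<omega> in M. real_cond_exp M F W \<omega> = h \<omega>"
  proof (rule real_cond_exp_charact)
    fix T assume "T \<in> sets F"
    have "(\<integral>\<omega>\<in>T. W \<omega> \<partial>M) = (\<integral>\<omega>\<in>T. indicator (space MV) (V \<omega>) * W \<omega> \<partial>M)"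
      and "(\<integral>\<omega>\<in>T. h \<omega> \<partial>M) = (\<integral>\<omega>\<in>T. h \<omega> * indicator (space MV) (V \<omega>) \<partial>M)"
      unfolding set_lebesgue_integral_def
      by (auto intro!: Bochner_Integration.integral_cong simp: measurable_space[OF \<open>V \<in> M \<rightarrow>\<^sub>M MV\<close>])
    with set_integral_eq[OF \<open>T \<in> sets F\<close> sets.top]
    show "(\<integral>\<omega>\<in>T. W \<omega> \<partial>M) = (\<integral>\<omega>\<in>T. h \<omega> \<partial>M)" by simp
  qed (simp_all add: integrable_W integrable_h)
  have "AE \<omega> in M. real_cond_exp M F (\<lambda>\<omega>. indicator A (V \<omega>) * W \<omega>) \<omega>
      = h \<omega> * real_cond_exp M F (\<lambda>\<omega>. indicator A (V \<omega>)) \<omega>"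
    using set_integral_eq[OF _ A] h_bounds
    by (intro real_cond_exp_mult_of_set_integrals integrable) (auto simp: W_def indicator_def abs_mult)
  with cond_W show ?thesis
    unfolding W_def
    by (intro real_cond_exp_binary_factorization R_vals integrable) (auto simp: indicator_def)
qed

lemma cond_indep_of_propensity:
  fixes R :: "'a \<Rightarrow> nat" and h :: "'z \<Rightarrow> real"
  assumes "prob_space M"
    and [measurable]: "V \<in> M \<rightarrow>\<^sub>M MV" "Z \<in> M \<rightarrow>\<^sub>M MZ" "R \<in> M \<rightarrow>\<^sub>M count_space UNIV"
    and R_vals: "\<And>\<omega>. \<omega> \<in> space M \<Longrightarrow> R \<omega> \<in> {0, 1}"
    and [measurable]: "h \<in> borel_measurable MZ"
    and h_bounds: "\<And>z. 0 \<le> h z \<and> h z \<le> 1"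
    and propensity: "\<And>C A. C \<in> sets MZ \<Longrightarrow> A \<in> sets MV \<Longrightarrow>
          emeasure M {\<omega>\<in>space M. Z \<omega> \<in> C \<and> V \<omega> \<in> A \<and> R \<omega> = 1}
          = (\<integral>\<^sup>+\<omega>\<in>{\<omega>\<in>space M. Z \<omega> \<in> C \<and> V \<omega> \<in> A}. h (Z \<omega>) \<partial>M)"
  shows "cond_indep M V MV R (count_space UNIV) Z MZ"
proof -
  interpret prob_space M by fact
  define G where "G = vimage_algebra (space M) Z MZ"
  have Z_space: "Z \<in> space M \<rightarrow> space MZ"
    using measurable_space[of Z M MZ] by auto
  have "subalgebra M G"
    unfolding G_def subalgebra_def using sets_image_in_sets[OF refl, of Z M MZ] by auto
  interpret G: finite_measure_subalgebra M G
    by (intro finite_measure_subalgebra.intro finite_measure_subalgebra_axioms.intro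
        finite_measure_axioms \<open>subalgebra M G\<close>)
  have [measurable]: "(\<lambda>\<omega>. h (Z \<omega>)) \<in> borel_measurable G"
    using measurable_vimage_algebra1[OF Z_space] unfolding G_def by measurable
  have "(\<integral>\<omega>\<in>T. indicator A (V \<omega>) * (if R \<omega> = 1 then 1 else 0 :: real) \<partial>M)
      = (\<integral>\<omega>\<in>T. h (Z \<omega>) * indicator A (V \<omega>) \<partial>M)"
    if T: "T \<in> sets G" and A[measurable]: "A \<in> sets MV" for T A
  proof -
    obtain C where C[measurable]: "C \<in> sets MZ" and T_eq: "T = Z -` C \<inter> space M"
      using T unfolding G_def sets_vimage_algebra2[OF Z_space] by blast
    have "(\<integral>\<omega>\<in>T. indicator A (V \<omega>) * (if R \<omega> = 1 then 1 else 0 :: real) \<partial>M)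
        = (\<integral>\<omega>. indicator {\<omega>\<in>space M. Z \<omega> \<in> C \<and> V \<omega> \<in> A \<and> R \<omega> = 1} \<omega> \<partial>M)"
      unfolding set_lebesgue_integral_def T_eq
      by (intro Bochner_Integration.integral_cong) (auto simp: indicator_def)
    also have "\<dots> = enn2real (\<integral>\<^sup>+\<omega>\<in>{\<omega>\<in>space M. Z \<omega> \<in> C \<and> V \<omega> \<in> A}. h (Z \<omega>) \<partial>M)"
      using propensity[OF C A] by (simp add: measure_def)
    also have "\<dots> = (\<integral>\<omega>\<in>T. h (Z \<omega>) * indicator A (V \<omega>) \<partial>M)"
      unfolding set_lebesgue_integral_def T_eq using h_bounds
      by (subst integral_eq_nn_integral)
         (auto intro!: arg_cong[where f=enn2real] nn_integral_cong simp: indicator_def)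
    finally show ?thesis .
  qed
  then show ?thesis
    unfolding cond_indep_def G_def[symmetric]
    by (intro ballI G.real_cond_exp_indicator_factorization R_vals) (simp_all add: h_bounds)
qed

lemma nn_integral_cell_density:
  fixes X :: "'a \<Rightarrow> 'b" and p f :: "'b \<Rightarrow> ennreal"
  assumes [measurable]: "E \<in> sets M" "X \<in> M \<rightarrow>\<^sub>M N" "p \<in> borel_measurable N" "f \<in> borel_measurable N"
    and density: "\<And>A. A \<in> sets N \<Longrightarrow>
          emeasure M {\<omega>\<in>E. X \<omega> \<in> A} = emeasure M E * (\<integral>\<^sup>+x\<in>A. p x \<partial>N)"
  shows "(\<integral>\<^sup>+\<omega>\<in>E. f (X \<omega>) \<partial>M) = (\<integral>\<^sup>+x. emeasure M E * p x * f x \<partial>N)"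
proof -
  have law: "distr (density M (indicator E)) N X = density N (\<lambda>x. emeasure M E * p x)"
  proof (rule measure_eqI)
    fix A assume "A \<in> sets (distr (density M (indicator E)) N X)"
    then have A[measurable]: "A \<in> sets N" by simp
    have "E \<inter> (X -` A \<inter> space M) = {\<omega>\<in>E. X \<omega> \<in> A}"
      using sets.sets_into_space[of E M] by auto
    then have "emeasure (distr (density M (indicator E)) N X) A = emeasure M {\<omega>\<in>E. X \<omega> \<in> A}"
      by (simp add: emeasure_distr emeasure_restricted)
    also have "\<dots> = emeasure (density N (\<lambda>x. emeasure M E * p x)) A"
      by (simp add: density emeasure_density nn_integral_cmult mult.assoc)
    finally show "emeasure (distr (density M (indicator E)) N X) A
        = emeasure (density N (\<lambda>x. emeasure M E * p x)) A" .
  qed simp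
  have "(\<integral>\<^sup>+\<omega>\<in>E. f (X \<omega>) \<partial>M) = (\<integral>\<^sup>+\<omega>. f (X \<omega>) \<partial>density M (indicator E))"
    by (simp add: nn_integral_density mult.commute)
  also have "\<dots> = (\<integral>\<^sup>+x. f x \<partial>distr (density M (indicator E)) N X)"
    by (simp add: nn_integral_distr)
  also have "\<dots> = (\<integral>\<^sup>+x. emeasure M E * p x * f x \<partial>N)"
    unfolding law by (simp add: nn_integral_density)
  finally show ?thesis .
qed

lemma nn_integral_cell_densities:
  fixes L :: "'a \<Rightarrow> 'l" and X :: "'a \<Rightarrow> 'b" and p f :: "'l \<Rightarrow> 'b \<Rightarrow> ennreal"
  assumes "finite S" and L_vals: "\<And>\<omega>. \<omega> \<in> space M \<Longrightarrow> L \<omega> \<in> S"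
    and cells: "\<And>l. l \<in> S \<Longrightarrow> {\<omega>\<in>space M. L \<omega> = l} \<in> sets M"
    and [measurable]: "X \<in> M \<rightarrow>\<^sub>M N"
    and p_meas: "\<And>l. l \<in> S \<Longrightarrow> p l \<in> borel_measurable N"
    and f_meas: "\<And>l. l \<in> S \<Longrightarrow> f l \<in> borel_measurable N"
    and density: "\<And>l A. l \<in> S \<Longrightarrow> A \<in> sets N \<Longrightarrow>
          emeasure M {\<omega>\<in>space M. X \<omega> \<in> A \<and> L \<omega> = l}
          = emeasure M {\<omega>\<in>space M. L \<omega> = l} * (\<integral>\<^sup>+x\<in>A. p l x \<partial>N)"
  shows "(\<integral>\<^sup>+\<omega>. f (L \<omega>) (X \<omega>) \<partial>M)
       = (\<Sum>l\<in>S. \<integral>\<^sup>+x. emeasure M {\<omega>\<in>space M. L \<omega> = l} * p l x * f l x \<partial>N)"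
proof -
  define E where "E l = {\<omega>\<in>space M. L \<omega> = l}" for l
  have "(\<integral>\<^sup>+\<omega>. f (L \<omega>) (X \<omega>) \<partial>M) = (\<integral>\<^sup>+\<omega>. (\<Sum>l\<in>S. f l (X \<omega>) * indicator (E l) \<omega>) \<partial>M)"
    using L_vals \<open>finite S\<close> by (intro nn_integral_cong) (simp add: E_def indicator_def sum.delta')
  also have "\<dots> = (\<Sum>l\<in>S. \<integral>\<^sup>+\<omega>\<in>E l. f l (X \<omega>) \<partial>M)"
  proof (rule nn_integral_sum)
    fix l assume "l \<in> S"
    then have [measurable]: "E l \<in> sets M" "f l \<in> borel_measurable N"
      using cells f_meas unfolding E_def by simp_all
    show "(\<lambda>\<omega>. f l (X \<omega>) * indicator (E l) \<omega>) \<in> borel_measurable M" by measurable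
  qed
  also have "\<dots> = (\<Sum>l\<in>S. \<integral>\<^sup>+x. emeasure M (E l) * p l x * f l x \<partial>N)"
  proof (rule sum.cong)
    fix l assume l: "l \<in> S"
    have "{\<omega>\<in>E l. X \<omega> \<in> A} = {\<omega>\<in>space M. X \<omega> \<in> A \<and> L \<omega> = l}" for A
      by (auto simp: E_def)
    with l show "(\<integral>\<^sup>+\<omega>\<in>E l. f l (X \<omega>) \<partial>M) = (\<integral>\<^sup>+x. emeasure M (E l) * p l x * f l x \<partial>N)"
      using cells p_meas f_meas density[of l] unfolding E_def[symmetric]
      by (intro nn_integral_cell_density) simp_all
  qed simp
  finally show ?thesis unfolding E_def .
qed

text \<open>Bayes' formula for P(R = 1 | Y = y, X = x).  Where both cell densities vanish it is 0,
  which is harmless: such points carry no mass.\<close>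
definition propensity ::
  "'a measure \<Rightarrow> ('a \<Rightarrow> 'l) \<Rightarrow> ('a \<Rightarrow> nat) \<Rightarrow> ('l \<Rightarrow> nat \<Rightarrow> 'b \<Rightarrow> real) \<Rightarrow> 'l \<Rightarrow> 'b \<Rightarrow> real"
  where "propensity M Y R p y x =
    (let q = (\<lambda>r. measure M {\<omega>\<in>space M. Y \<omega> = y \<and> R \<omega> = r} * p y r x) in q 1 / (q 0 + q 1))"

locale conditional_densities = prob_space M for M :: "'a measure" +
  fixes N :: "'b measure" and X :: "'a \<Rightarrow> 'b" and Y :: "'a \<Rightarrow> 'l" and R :: "'a \<Rightarrow> nat"
    and S :: "'l set" and p :: "'l \<Rightarrow> nat \<Rightarrow> 'b \<Rightarrow> real"
  assumes finite_labels: "finite S"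
    and X_measurable [measurable]: "X \<in> M \<rightarrow>\<^sub>M N"
    and Y_measurable [measurable]: "Y \<in> M \<rightarrow>\<^sub>M count_space UNIV"
    and R_measurable [measurable]: "R \<in> M \<rightarrow>\<^sub>M count_space UNIV"
    and Y_values: "\<And>\<omega>. \<omega> \<in> space M \<Longrightarrow> Y \<omega> \<in> S"
    and R_values: "\<And>\<omega>. \<omega> \<in> space M \<Longrightarrow> R \<omega> \<in> {0, 1}"
    and density_measurable: "\<And>y r. y \<in> S \<Longrightarrow> r \<in> {0, 1} \<Longrightarrow> p y r \<in> borel_measurable N"
    and density_nonneg: "\<And>y r x. y \<in> S \<Longrightarrow> r \<in> {0, 1} \<Longrightarrow> 0 \<le> p y r x"
    and conditional_density: "\<And>y r A. y \<in> S \<Longrightarrow> r \<in> {0, 1} \<Longrightarrow> A \<in> sets N \<Longrightarrow>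
          emeasure M {\<omega>\<in>space M. X \<omega> \<in> A \<and> Y \<omega> = y \<and> R \<omega> = r}
          = emeasure M {\<omega>\<in>space M. Y \<omega> = y \<and> R \<omega> = r} * (\<integral>\<^sup>+x\<in>A. ennreal (p y r x) \<partial>N)"
begin

definition joint_density :: "'l \<Rightarrow> nat \<Rightarrow> 'b \<Rightarrow> real"
  where "joint_density y r x = measure M {\<omega>\<in>space M. Y \<omega> = y \<and> R \<omega> = r} * p y r x"

lemma joint_density_nonneg: "y \<in> S \<Longrightarrow> r \<in> {0, 1} \<Longrightarrow> 0 \<le> joint_density y r x"
  using density_nonneg by (simp add: joint_density_def)

lemma borel_measurable_joint_density:
  "y \<in> S \<Longrightarrow> r \<in> {0, 1} \<Longrightarrow> joint_density y r \<in> borel_measurable N"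
  using density_measurable unfolding joint_density_def by measurable

lemma propensity_eq_joint_density:
  "propensity M Y R p y x = joint_density y 1 x / (joint_density y 0 x + joint_density y 1 x)"
  by (simp add: propensity_def joint_density_def)

lemma joint_density_propensity_sum:
  assumes "y \<in> S"
  shows "ennreal (joint_density y 0 x) * propensity M Y R p y x
       + ennreal (joint_density y 1 x) * propensity M Y R p y x = ennreal (joint_density y 1 x)"
proof -
  define q where "q r = joint_density y r x" for r
  have q0: "0 \<le> q 0" and q1: "0 \<le> q 1"
    using joint_density_nonneg[OF assms] by (simp_all add: q_def)
  have \<pi>: "propensity M Y R p y x = q 1 / (q 0 + q 1)"
    by (simp add: propensity_eq_joint_density q_def)
  have "q 1 = (q 0 + q 1) * (q 1 / (q 0 + q 1))"
    using q0 q1 by (cases "q 0 + q 1 = 0") simp_all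
  then have "ennreal (q 1) = ennreal (q 0 + q 1) * (q 1 / (q 0 + q 1))"
    using q0 q1 by (metis ennreal_mult add_nonneg_nonneg divide_nonneg_nonneg)
  then show ?thesis
    using q0 q1 unfolding \<pi> q_def[symmetric] by (simp add: ennreal_plus distrib_right)
qed

lemma nn_integral_joint_density:
  assumes f_meas: "\<And>y r. y \<in> S \<Longrightarrow> r \<in> {0, 1} \<Longrightarrow> f y r \<in> borel_measurable N"
  shows "(\<integral>\<^sup>+\<omega>. f (Y \<omega>) (R \<omega>) (X \<omega>) \<partial>M)
       = (\<Sum>y\<in>S. \<Sum>r\<in>{0, 1}. \<integral>\<^sup>+x. ennreal (joint_density y r x) * f y r x \<partial>N)"
proof -
  have "(\<integral>\<^sup>+\<omega>. f (Y \<omega>) (R \<omega>) (X \<omega>) \<partial>M) = (\<integral>\<^sup>+\<omega>. case_prod f (Y \<omega>, R \<omega>) (X \<omega>) \<partial>M)"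
    by simp
  also have "\<dots> = (\<Sum>l\<in>S \<times> {0, 1}. \<integral>\<^sup>+x. emeasure M {\<omega>\<in>space M. (Y \<omega>, R \<omega>) = l}
                        * ennreal (p (fst l) (snd l) x) * case_prod f l x \<partial>N)"
  proof (rule nn_integral_cell_densities)
    fix l :: "'l \<times> nat" and A assume "l \<in> S \<times> {0, 1}" "A \<in> sets N"
    then show "emeasure M {\<omega>\<in>space M. X \<omega> \<in> A \<and> (Y \<omega>, R \<omega>) = l}
        = emeasure M {\<omega>\<in>space M. (Y \<omega>, R \<omega>) = l} * (\<integral>\<^sup>+x\<in>A. ennreal (p (fst l) (snd l) x) \<partial>N)"
      using conditional_density by (cases l) auto
  qed (use Y_values R_values finite_labels density_measurable f_meas in auto)
  also have "\<dots> = (\<Sum>(y, r)\<in>S \<times> {0, 1}. \<integral>\<^sup>+x. ennreal (joint_density y r x) * f y r x \<partial>N)"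
    using density_nonneg
    by (intro sum.cong nn_integral_cong) (auto simp: joint_density_def emeasure_eq_measure ennreal_mult)
  finally show ?thesis
    by (simp only: sum.cartesian_product)
qed

lemma emeasure_R_eq_1_propensity:
  assumes D[measurable]: "D \<in> sets (count_space UNIV \<Otimes>\<^sub>M N)"
  shows "emeasure M {\<omega>\<in>space M. (Y \<omega>, X \<omega>) \<in> D \<and> R \<omega> = 1}
       = (\<integral>\<^sup>+\<omega>\<in>{\<omega>\<in>space M. (Y \<omega>, X \<omega>) \<in> D}. propensity M Y R p (Y \<omega>) (X \<omega>) \<partial>M)"
proof -
  let ?q = joint_density and ?\<pi> = "propensity M Y R p"
  have [measurable]: "?q y r \<in> borel_measurable N" "?\<pi> y \<in> borel_measurable N"
    if "y \<in> S" "r \<in> {0, 1}" for y r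
    using that borel_measurable_joint_density unfolding propensity_eq_joint_density by measurable
  have "emeasure M {\<omega>\<in>space M. (Y \<omega>, X \<omega>) \<in> D \<and> R \<omega> = 1}
      = (\<integral>\<^sup>+\<omega>. indicator D (Y \<omega>, X \<omega>) * indicator {1} (R \<omega>) \<partial>M)"
    by (rule trans[OF nn_integral_indicator[symmetric] nn_integral_cong]) (auto split: split_indicator)
  also have "\<dots> = (\<Sum>y\<in>S. \<integral>\<^sup>+x. ennreal (?q y 1 x) * indicator D (y, x) \<partial>N)"
    by (subst nn_integral_joint_density) (auto simp: mult.commute)
  also have "\<dots> = (\<Sum>y\<in>S. \<integral>\<^sup>+x. (\<Sum>r\<in>{0, 1}. ennreal (?q y r x) * (ennreal (?\<pi> y x) * indicator D (y, x))) \<partial>N)"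
    using joint_density_propensity_sum
    by (intro sum.cong nn_integral_cong) (auto split: split_indicator)
  also have "\<dots> = (\<Sum>y\<in>S. \<Sum>r\<in>{0, 1}. \<integral>\<^sup>+x. ennreal (?q y r x) * (ennreal (?\<pi> y x) * indicator D (y, x)) \<partial>N)"
    by (intro sum.cong nn_integral_sum) auto
  also have "\<dots> = (\<integral>\<^sup>+\<omega>\<in>{\<omega>\<in>space M. (Y \<omega>, X \<omega>) \<in> D}. ?\<pi> (Y \<omega>) (X \<omega>) \<partial>M)"
    by (subst nn_integral_joint_density[symmetric]) (auto intro!: nn_integral_cong split: split_indicator)
  finally show ?thesis .
qed

lemma cond_indep_of_propensity_reduction:
  fixes \<zeta> :: "'b \<Rightarrow> 'u" and \<phi> :: "'b \<Rightarrow> 'v" and h :: "'l \<times> 'u \<Rightarrow> real"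
  assumes [measurable]: "\<zeta> \<in> N \<rightarrow>\<^sub>M MU" "\<phi> \<in> N \<rightarrow>\<^sub>M MV"
    and h_meas: "h \<in> borel_measurable (count_space UNIV \<Otimes>\<^sub>M MU)"
    and h_bounds: "\<And>z. 0 \<le> h z \<and> h z \<le> 1"
    and reduction: "\<And>y x. y \<in> S \<Longrightarrow> propensity M Y R p y x = h (y, \<zeta> x)"
  shows "cond_indep M (\<lambda>\<omega>. \<phi> (X \<omega>)) MV R (count_space UNIV)
           (\<lambda>\<omega>. (Y \<omega>, \<zeta> (X \<omega>))) (count_space UNIV \<Otimes>\<^sub>M MU)"
proof (rule cond_indep_of_propensity[OF prob_space_axioms _ _ R_measurable R_values h_meas h_bounds])
  fix C :: "('l \<times> 'u) set" and A :: "'v set"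
  assume [measurable]: "C \<in> sets (count_space UNIV \<Otimes>\<^sub>M MU)" "A \<in> sets MV"
  define D where "D = {z \<in> space (count_space UNIV \<Otimes>\<^sub>M N). (fst z, \<zeta> (snd z)) \<in> C \<and> \<phi> (snd z) \<in> A}"
  have "D \<in> sets (count_space UNIV \<Otimes>\<^sub>M N)"
    unfolding D_def by measurable
  have "{\<omega>\<in>space M. (Y \<omega>, X \<omega>) \<in> D \<and> R \<omega> = 1}
      = {\<omega>\<in>space M. (Y \<omega>, \<zeta> (X \<omega>)) \<in> C \<and> \<phi> (X \<omega>) \<in> A \<and> R \<omega> = 1}"
    and "{\<omega>\<in>space M. (Y \<omega>, X \<omega>) \<in> D} = {\<omega>\<in>space M. (Y \<omega>, \<zeta> (X \<omega>)) \<in> C \<and> \<phi> (X \<omega>) \<in> A}"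
    using measurable_space[OF X_measurable] by (auto simp: D_def space_pair_measure)
  with emeasure_R_eq_1_propensity[OF \<open>D \<in> sets (count_space UNIV \<Otimes>\<^sub>M N)\<close>]
  show "emeasure M {\<omega>\<in>space M. (Y \<omega>, \<zeta> (X \<omega>)) \<in> C \<and> \<phi> (X \<omega>) \<in> A \<and> R \<omega> = 1}
      = (\<integral>\<^sup>+\<omega>\<in>{\<omega>\<in>space M. (Y \<omega>, \<zeta> (X \<omega>)) \<in> C \<and> \<phi> (X \<omega>) \<in> A}. h (Y \<omega>, \<zeta> (X \<omega>)) \<partial>M)"
    using Y_values by (auto simp: reduction intro!: nn_integral_cong split: split_indicator)
qed simp_all

end

text \<open>The logistic propensity of the tilt model as a function of y and u = (\<beta> 0 \<bullet> x, \<beta> 1 \<bullet> x):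
  the tilt exponent of label y uses the y-th component of u.\<close>
definition tilt_propensity :: "real \<Rightarrow> (nat \<Rightarrow> real) \<Rightarrow> nat \<times> real \<times> real \<Rightarrow> real"
  where "tilt_propensity c \<alpha> = (\<lambda>(y, u0, u1). 1 / (1 + c * exp (\<alpha> y + (if y = 0 then u0 else u1))))"

lemma tilt_propensity_bounds:
  assumes "0 \<le> c"
  shows "0 \<le> tilt_propensity c \<alpha> z \<and> tilt_propensity c \<alpha> z \<le> 1"
proof -
  have "0 < 1 + c * exp t" for t
    using assms by (simp add: add_pos_nonneg)
  then show ?thesis
    using assms by (simp add: tilt_propensity_def split: prod.split)
qed

lemma borel_measurable_tilt_propensity:
  assumes "0 \<le> c"
  shows "tilt_propensity c \<alpha> \<in> borel_measurable (count_space UNIV \<Otimes>\<^sub>M borel)"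
proof (rule measurable_pair_measure_countable1)
  fix y :: nat
  have "1 + c * exp t \<noteq> 0" for t
    using assms by (simp add: add_pos_nonneg less_imp_not_eq2)
  then have "continuous_on UNIV (\<lambda>u. tilt_propensity c \<alpha> (y, u))"
    by (cases "y = 0") (auto simp: tilt_propensity_def case_prod_beta intro!: continuous_intros)
  then show "(\<lambda>u. tilt_propensity c \<alpha> (y, u)) \<in> borel_measurable borel"
    by (rule borel_measurable_continuous_onI)
qed simp

lemma propensity_exponential_tilt:
  assumes tilt: "p y 0 x * (measure M {\<omega>\<in>space M. Y \<omega> = y \<and> R \<omega> = 0} / a0)
      = exp t * p y 1 x * (measure M {\<omega>\<in>space M. Y \<omega> = y \<and> R \<omega> = 1} / a1)"
    and "0 < a0" "0 < a1" "0 < measure M {\<omega>\<in>space M. Y \<omega> = y \<and> R \<omega> = 1}" "0 < p y 1 x"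
  shows "propensity M Y R p y x = 1 / (1 + a0 / a1 * exp t)"
proof -
  define q where "q r = measure M {\<omega>\<in>space M. Y \<omega> = y \<and> R \<omega> = r} * p y r x" for r
  have "q 0 = a0 / a1 * exp t * q 1"
    using tilt \<open>0 < a0\<close> \<open>0 < a1\<close> unfolding q_def by (simp add: field_simps)
  then have "q 0 + q 1 = (1 + a0 / a1 * exp t) * q 1"
    by (simp add: distrib_right)
  moreover have "0 < q 1"
    using assms(4,5) unfolding q_def by simp
  ultimately show ?thesis
    unfolding propensity_def q_def[symmetric] Let_def by simp
qed

theorem lemma6:
  fixes M :: "'a measure"
    and X :: "'a \<Rightarrow> real ^ 'd"
    and Y R :: "'a \<Rightarrow> nat"
    and p :: "nat \<Rightarrow> nat \<Rightarrow> real ^ 'd \<Rightarrow> real"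
    and \<alpha> :: "nat \<Rightarrow> real"
    and \<beta> :: "nat \<Rightarrow> real ^ 'd"
  assumes prob: "prob_space M"
    and X_meas: "X \<in> M \<rightarrow>\<^sub>M borel"
    and Y_meas: "Y \<in> M \<rightarrow>\<^sub>M count_space UNIV"
    and R_meas: "R \<in> M \<rightarrow>\<^sub>M count_space UNIV"
    and Y_vals: "\<forall>\<omega>\<in>space M. Y \<omega> \<in> {0, 1}"
    and R_vals: "\<forall>\<omega>\<in>space M. R \<omega> \<in> {0, 1}"
    and pos_cells: "\<forall>y\<in>{0,1}. \<forall>r\<in>{0,1}.
          measure M {\<omega>\<in>space M. Y \<omega> = y \<and> R \<omega> = r} > 0"
    and p_meas: "\<forall>y\<in>{0,1}. \<forall>r\<in>{0,1}. p y r \<in> borel_measurable lborel"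
    and p_pos: "\<forall>y\<in>{0,1}. \<forall>r\<in>{0,1}. \<forall>x. p y r x > 0"
    and p_density: "\<forall>y\<in>{0,1}. \<forall>r\<in>{0,1}. \<forall>A\<in>sets borel.
          emeasure M {\<omega>\<in>space M. X \<omega> \<in> A \<and> Y \<omega> = y \<and> R \<omega> = r}
          = emeasure M {\<omega>\<in>space M. Y \<omega> = y \<and> R \<omega> = r}
            * (\<integral>\<^sup>+ x\<in>A. ennreal (p y r x) \<partial>lborel)"
    and tilt: "\<forall>x. \<forall>y\<in>{0,1}.
          p y 0 x * (measure M {\<omega>\<in>space M. Y \<omega> = y \<and> R \<omega> = 0}
                      / measure M {\<omega>\<in>space M. R \<omega> = 0})
          = exp (\<alpha> y + \<beta> y \<bullet> x) * p y 1 x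
            * (measure M {\<omega>\<in>space M. Y \<omega> = y \<and> R \<omega> = 1}
               / measure M {\<omega>\<in>space M. R \<omega> = 1})"
  defines "U \<equiv> (\<lambda>\<omega>. (\<beta> 0 \<bullet> X \<omega>, \<beta> 1 \<bullet> X \<omega>))"
    and "V \<equiv> (\<lambda>\<omega>. X \<omega> - orth_proj (span {\<beta> 0, \<beta> 1}) (X \<omega>))"
  shows "cond_indep M V borel R (count_space UNIV)
           (\<lambda>\<omega>. (Y \<omega>, U \<omega>)) (count_space UNIV \<Otimes>\<^sub>M borel)
       \<and> cond_indep M X borel R (count_space UNIV)
           (\<lambda>\<omega>. (Y \<omega>, U \<omega>)) (count_space UNIV \<Otimes>\<^sub>M borel)"
proof -
  interpret prob_space M by (rule prob)
  interpret conditional_densities M lborel X Y R "{0, 1}" p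
    using X_meas Y_meas R_meas Y_vals R_vals p_meas p_pos p_density
    by unfold_locales (auto simp: less_imp_le)
  define a where "a r = measure M {\<omega>\<in>space M. R \<omega> = r}" for r
  have a_pos: "0 < a r" if "r \<in> {0, 1}" for r
    using pos_cells that finite_measure_mono[of "{\<omega>\<in>space M. Y \<omega> = 0 \<and> R \<omega> = r}" "{\<omega>\<in>space M. R \<omega> = r}"]
    unfolding a_def by fastforce
  have reduction: "propensity M Y R p y x = tilt_propensity (a 0 / a 1) \<alpha> (y, \<beta> 0 \<bullet> x, \<beta> 1 \<bullet> x)"
    if "y \<in> {0, 1}" for y x
  proof -
    have "propensity M Y R p y x = 1 / (1 + a 0 / a 1 * exp (\<alpha> y + \<beta> y \<bullet> x))"
      using that tilt pos_cells p_pos a_pos unfolding a_def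
      by (intro propensity_exponential_tilt) auto
    then show ?thesis
      using that by (auto simp: tilt_propensity_def)
  qed
  have c: "0 \<le> a 0 / a 1"
    using a_pos[of 0] a_pos[of 1] by simp
  have cond_indep_fun: "cond_indep M (\<lambda>\<omega>. \<phi> (X \<omega>)) borel R (count_space UNIV)
      (\<lambda>\<omega>. (Y \<omega>, U \<omega>)) (count_space UNIV \<Otimes>\<^sub>M borel)"
    if "\<phi> \<in> borel_measurable borel" for \<phi> :: "real ^ 'd \<Rightarrow> real ^ 'd"
    unfolding U_def using that reduction
    by (intro cond_indep_of_propensity_reduction[OF _ _ borel_measurable_tilt_propensity[OF c]
          tilt_propensity_bounds[OF c]]) simp_all
  have "(\<lambda>x. x - orth_proj (span {\<beta> 0, \<beta> 1}) x) \<in> borel_measurable borel"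
    using borel_measurable_orth_proj[OF subspace_span] by measurable
  from cond_indep_fun[OF this] cond_indep_fun[of "\<lambda>x. x"] show ?thesis
    unfolding V_def by simp
qed

end
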